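(* For $x\in(0,1)$ let $B(x)=B(x,1-x)$ and $R(x)=R(x,1-x)$. Then (1) the function $f(x)=\big(1+x(1-x)-(x(1-x))^2\big)B(x)-R(x)$ is strictly completely monotonic on $(0,1/2)$; (2) the function $g(x)=R(x)-\dfrac{B(x)}{1+x(1-x)}$ is strictly completely monotonic on $(0,1/2)$.
   Context: $B(x,y)=\Gamma(x)\Gamma(y)/\Gamma(x+y)$, $\psi=\Gamma'/\Gamma$, $\gamma=-\psi(1)$, $R(a,b)=-2\gamma-\psi(a)-\psi(b)$. A function $f$ on an interval $I$ is strictly completely monotonic if $(-1)^nf^{(n)}(x)>0$ for all $n\ge0$ and $x\in I$. *)

theory Defs
  imports "HOL-Analysis.Analysis"
begin

definition RR :: "real \<Rightarrow> real \<Rightarrow> real" where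
  "RR a b = - 2 * euler_mascheroni - Digamma a - Digamma b"

definition strictly_completely_monotonic_on :: "real set \<Rightarrow> (real \<Rightarrow> real) \<Rightarrow> bool" where
  "strictly_completely_monotonic_on I f \<longleftrightarrow>
     (\<forall>n. \<forall>x\<in>I. ((deriv ^^ n) f has_real_derivative (deriv ^^ Suc n) f x) (at x)) \<and>
     (\<forall>n. \<forall>x\<in>I. (-1) ^ n * (deriv ^^ n) f x > 0)"

end

theory Submission
  imports Defs
begin

text \<open>
  Put \<open>x = 1/2 - t\<close>. The partial fraction expansions of \<open>Digamma\<close> and of \<open>pi / sin (pi * x)\<close>
  write \<open>R(x)\<close> and \<open>B(x)\<close> as series in the pole pairs \<open>P(a, t) = 1/(a - t) + 1/(a + t)\<close>, \<open>a = k + 1/2\<close>,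
  whose \<open>t\<close>-derivatives of every order are positive for \<open>0 < t < a\<close>.

  Expanding each term of \<open>f\<close> in powers of \<open>t^2\<close> gives \<open>f(x) = f(1/2) + c t^2 + t^4 W(t)\<close> with \<open>c \<ge> 0\<close>,
  where \<open>W\<close> is a series of pairs \<open>A * P(a, t) + C * P(a + 1, t)\<close> of pole pairs with \<open>A > 0 > C\<close> and
  \<open>A/a > -C/(a + 1)\<close>; since \<open>a\<close> times any derivative of \<open>P(a, t)\<close> decreases in \<open>a\<close>, every derivative
  of every such pair is positive. Likewise \<open>g(x) = g(1/2) + K (q(t) - 4/5) + Z(t)\<close> with \<open>K \<ge> 0\<close>,
  where \<open>q(t) = 1/(5/4 - t^2)\<close> is itself a pole pair at \<open>sqrt 5/2\<close> and \<open>Z\<close> is a series of pole pairs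
  with nonnegative weights. So all \<open>t\<close>-derivatives of \<open>f(1/2 - t)\<close> and \<open>g(1/2 - t)\<close> are positive for
  \<open>0 < t < 1/2\<close>, which is complete monotonicity in \<open>x\<close>.
\<close>

section \<open>Pairs of simple poles\<close>

lemma has_real_derivative_inverse_power:
  fixes x :: real
  assumes "x \<noteq> 0"
  shows "((\<lambda>x. 1 / x ^ Suc n) has_real_derivative - real (Suc n) / x ^ Suc (Suc n)) (at x)"
proof -
  have "((\<lambda>x. inverse (x ^ Suc n)) has_real_derivative
          - (real (Suc n) * x ^ n * inverse ((x ^ Suc n) ^ Suc (Suc 0)))) (at x)"
    using DERIV_inverse_fun[OF DERIV_pow[of "Suc n"]] assms by simp
  also have "- (real (Suc n) * x ^ n * inverse ((x ^ Suc n) ^ Suc (Suc 0))) = - real (Suc n) / x ^ Suc (Suc n)"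
    using assms by (simp add: field_simps power2_eq_square)
  finally show ?thesis by (simp only: inverse_eq_divide)
qed

definition pole_pair :: "nat \<Rightarrow> real \<Rightarrow> real \<Rightarrow> real" where
  "pole_pair n a t = fact n * (1/(a-t)^Suc n + (-1)^n/(a+t)^Suc n)"

lemma pole_pair_0: "pole_pair 0 a t = 1/(a-t) + 1/(a+t)"
  by (simp add: pole_pair_def)

lemma pole_pair_0_eq: "a \<noteq> t \<Longrightarrow> a \<noteq> -t \<Longrightarrow> pole_pair 0 a t = 2*a/(a^2 - t^2)"
  unfolding pole_pair_0 by (simp add: field_simps power2_eq_square)

lemma has_real_derivative_pole_pair:
  assumes "t \<noteq> a" "t \<noteq> -a"
  shows "(pole_pair n a has_real_derivative pole_pair (Suc n) a t) (at t)"
proof -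
  have "((\<lambda>t. 1/(a-t)^Suc n) has_real_derivative - real (Suc n) / (a-t)^Suc (Suc n) * (0 - 1)) (at t)"
    using assms by (intro DERIV_chain2[OF has_real_derivative_inverse_power]) (auto intro!: derivative_eq_intros)
  moreover have "((\<lambda>t. 1/(a+t)^Suc n) has_real_derivative - real (Suc n) / (a+t)^Suc (Suc n) * (0 + 1)) (at t)"
    using assms by (intro DERIV_chain2[OF has_real_derivative_inverse_power]) (auto intro!: derivative_eq_intros)
  ultimately have "((\<lambda>t. fact n * (1/(a-t)^Suc n + (-1)^n * (1/(a+t)^Suc n))) has_real_derivative
      fact n * (- real (Suc n) / (a-t)^Suc (Suc n) * (0 - 1) + (-1)^n * (- real (Suc n) / (a+t)^Suc (Suc n) * (0 + 1)))) (at t)"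
    by (intro DERIV_cmult DERIV_add)
  moreover have "pole_pair n a = (\<lambda>t. fact n * (1/(a-t)^Suc n + (-1)^n * (1/(a+t)^Suc n)))"
    by (simp add: pole_pair_def fun_eq_iff)
  moreover have "fact n * (- real (Suc n) / (a-t)^Suc (Suc n) * (0 - 1) + (-1)^n * (- real (Suc n) / (a+t)^Suc (Suc n) * (0 + 1)))
      = pole_pair (Suc n) a t"
    by (simp add: pole_pair_def algebra_simps flip: add_divide_distrib diff_divide_distrib)
  ultimately show ?thesis by simp
qed

lemma pole_pair_pos:
  assumes "0 < t" "t < a"
  shows "pole_pair n a t > 0"
proof -
  have "(a-t)^Suc n < (a+t)^Suc n"
    using assms by (intro power_strict_mono) auto
  then have "1/(a+t)^Suc n < 1/(a-t)^Suc n"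
    using assms by (intro divide_strict_left_mono) auto
  moreover have "\<bar>(-1)^n/(a+t)^Suc n\<bar> = 1/(a+t)^Suc n"
    using assms by simp
  ultimately have "1/(a-t)^Suc n + (-1)^n/(a+t)^Suc n > 0"
    using abs_ge_minus_self[of "(-1)^n/(a+t)^Suc n"] by linarith
  then show ?thesis
    unfolding pole_pair_def by simp
qed

lemma has_real_derivative_div_shifted_power:
  fixes c s :: real
  assumes "c + s \<noteq> 0"
  shows "((\<lambda>c. c / (c + s)^Suc n) has_real_derivative - (real n * c - s) / (c + s)^Suc (Suc n)) (at c)"
proof -
  have "((\<lambda>c. c * (1 / (c + s)^Suc n)) has_real_derivative
          c * (- real (Suc n) / (c + s)^Suc (Suc n) * 1) + 1 * (1 / (c + s)^Suc n)) (at c)"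
    using assms by (intro DERIV_mult' DERIV_ident DERIV_chain2[OF has_real_derivative_inverse_power])
      (auto intro!: derivative_eq_intros)
  moreover have "1 / (c + s)^Suc n = (c + s) / (c + s)^Suc (Suc n)"
    using assms by simp
  ultimately show ?thesis
    by (simp add: algebra_simps flip: add_divide_distrib diff_divide_distrib)
qed

text \<open>The pole at \<open>a - t\<close> dominates the one at \<open>a + t\<close>, which makes \<open>a * pole_pair n a t\<close>
  decrease in \<open>a\<close> whatever the sign of \<open>(-1)^n\<close>.\<close>

lemma mult_pole_pair_antimono:
  assumes "0 \<le> t" "t < a" "a \<le> b"
  shows "b * pole_pair n b t \<le> a * pole_pair n a t"
proof -
  define h where "h c = fact n * (c / (c + (-t))^Suc n + (-1)^n * (c / (c + t)^Suc n))" for c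
  have "h b \<le> h a"
  proof (rule DERIV_nonpos_imp_nonincreasing[OF \<open>a \<le> b\<close>])
    fix c assume c: "a \<le> c" "c \<le> b"
    have "c + (-t) \<noteq> 0" "c + t \<noteq> 0"
      using assms c by auto
    note d = this[THEN has_real_derivative_div_shifted_power]
    define D where "D = fact n * (- (real n * c - (-t)) / (c + (-t))^Suc (Suc n)
                                  + (-1)^n * (- (real n * c - t) / (c + t)^Suc (Suc n)))"
    have "(h has_real_derivative D) (at c)"
      unfolding h_def [abs_def] D_def by (intro DERIV_cmult DERIV_add d)
    moreover have "D \<le> 0"
    proof -
      have pos: "0 < (c - t)^Suc (Suc n)" "0 < (c + t)^Suc (Suc n)"
        using assms c by simp_all
      have le: "(c - t)^Suc (Suc n) \<le> (c + t)^Suc (Suc n)"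
        using assms c by (intro power_mono) auto
      have "(-1)^n * (- (real n * c - t) / (c + t)^Suc (Suc n))
          \<le> \<bar>(-1)^n * (- (real n * c - t) / (c + t)^Suc (Suc n))\<bar>"
        by (rule abs_ge_self)
      also have "\<dots> = \<bar>real n * c - t\<bar> / (c + t)^Suc (Suc n)"
        using pos by (simp add: abs_mult abs_minus_commute del: power_Suc)
      also have "\<dots> \<le> (real n * c + t) / (c + t)^Suc (Suc n)"
        using pos assms c by (intro divide_right_mono) (auto simp: abs_le_iff)
      also have "\<dots> \<le> (real n * c + t) / (c - t)^Suc (Suc n)"
        using pos le assms c by (intro divide_left_mono) auto
      finally have "- (real n * c - (-t)) / (c + (-t))^Suc (Suc n)
          + (-1)^n * (- (real n * c - t) / (c + t)^Suc (Suc n)) \<le> 0"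
        by (simp add: add_divide_distrib diff_divide_distrib)
      then show ?thesis
        unfolding D_def by (simp add: mult_nonneg_nonpos)
    qed
    ultimately show "\<exists>y. (h has_real_derivative y) (at c) \<and> y \<le> 0" by blast
  qed
  moreover have "h c = c * pole_pair n c t" for c
    unfolding h_def pole_pair_def by (simp add: algebra_simps)
  ultimately show ?thesis by simp
qed

text \<open>Subtracting the value at \<open>0\<close> in order zero is what makes the series for \<open>g\<close> converge.\<close>

definition pole_pair_centered :: "nat \<Rightarrow> real \<Rightarrow> real \<Rightarrow> real" where
  "pole_pair_centered n a t = (if n = 0 then pole_pair 0 a t - pole_pair 0 a 0 else pole_pair n a t)"

lemma has_real_derivative_pole_pair_centered:
  assumes "t \<noteq> a" "t \<noteq> -a"
  shows "(pole_pair_centered n a has_real_derivative pole_pair_centered (Suc n) a t) (at t)"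
proof -
  have "((\<lambda>t. pole_pair n a t - (if n = 0 then pole_pair 0 a 0 else 0)) has_real_derivative
      pole_pair (Suc n) a t - 0) (at t)"
    using assms by (intro DERIV_diff has_real_derivative_pole_pair DERIV_const)
  then show ?thesis
    unfolding pole_pair_centered_def [abs_def] by (cases "n = 0") simp_all
qed

lemma pole_pair_centered_pos:
  assumes "0 < t" "t < a"
  shows "pole_pair_centered n a t > 0"
proof (cases "n = 0")
  case True
  have "0 < a^2 - t^2" "a^2 - t^2 < a^2"
    using assms by (auto simp: power2_eq_square intro: mult_strict_mono)
  then have "2*a/a^2 < 2*a/(a^2 - t^2)"
    using assms by (intro divide_strict_left_mono) auto
  moreover have "pole_pair 0 a t = 2*a/(a^2 - t^2)"
    using assms by (intro pole_pair_0_eq) auto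
  moreover have "pole_pair 0 a 0 = 2*a/a^2"
    using assms by (simp add: pole_pair_0 power2_eq_square)
  ultimately show ?thesis
    using True by (simp add: pole_pair_centered_def)
qed (use assms pole_pair_pos in \<open>simp add: pole_pair_centered_def\<close>)

lemma abs_pole_pair_le:
  assumes "\<bar>t\<bar> \<le> \<rho>" "\<rho> < a"
  shows "\<bar>pole_pair n a t\<bar> \<le> 2 * fact n / (a - \<rho>)^Suc n"
proof -
  have "(a - \<rho>)^Suc n \<le> \<bar>a - t\<bar>^Suc n" "(a - \<rho>)^Suc n \<le> \<bar>a + t\<bar>^Suc n"
    using assms by (intro power_mono; simp)+
  then have le: "1/\<bar>a - t\<bar>^Suc n \<le> 1/(a - \<rho>)^Suc n" "1/\<bar>a + t\<bar>^Suc n \<le> 1/(a - \<rho>)^Suc n"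
    using assms by (intro divide_left_mono; simp)+
  have "\<bar>pole_pair n a t\<bar> \<le> fact n * (1/\<bar>a - t\<bar>^Suc n + 1/\<bar>a + t\<bar>^Suc n)"
    unfolding pole_pair_def abs_mult abs_of_pos[OF fact_gt_zero]
    by (intro mult_left_mono order.trans[OF abs_triangle_ineq] add_mono) (simp_all add: abs_mult power_abs)
  also have "\<dots> \<le> fact n * (1/(a - \<rho>)^Suc n + 1/(a - \<rho>)^Suc n)"
    using le by (intro mult_left_mono add_mono) auto
  finally show ?thesis by (simp add: mult.commute)
qed

lemma abs_pole_pair_le_inverse_square:
  assumes "0 < n" "\<bar>t\<bar> \<le> \<rho>" "1 \<le> m" "m \<le> a - \<rho>"
  shows "\<bar>pole_pair n a t\<bar> \<le> 2 * fact n / m^2"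
proof -
  have "m^2 \<le> m^Suc n" "m^Suc n \<le> (a - \<rho>)^Suc n"
    using assms by (intro power_increasing power_mono; simp)+
  then have "2 * fact n / (a - \<rho>)^Suc n \<le> 2 * fact n / m^2"
    using assms by (intro divide_left_mono) auto
  with abs_pole_pair_le[of t \<rho> a n] assms show ?thesis by simp
qed

lemma abs_lincomb_pole_pair_le:
  assumes "0 < n" "\<bar>t\<bar> \<le> \<rho>" "1 \<le> m" "m \<le> a - \<rho>" "m \<le> b - \<rho>" "\<bar>c\<bar> \<le> 2" "\<bar>d\<bar> \<le> 2"
  shows "\<bar>c * pole_pair n a t + d * pole_pair n b t\<bar> \<le> 8 * fact n / m^2"
proof -
  have "\<bar>c * pole_pair n a t + d * pole_pair n b t\<bar> \<le> \<bar>c\<bar> * \<bar>pole_pair n a t\<bar> + \<bar>d\<bar> * \<bar>pole_pair n b t\<bar>"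
    by (metis abs_mult abs_triangle_ineq)
  also have "\<dots> \<le> 2 * (2 * fact n / m^2) + 2 * (2 * fact n / m^2)"
    using assms abs_pole_pair_le_inverse_square[of n t \<rho> m]
    by (intro add_mono mult_mono) auto
  finally show ?thesis by simp
qed

section \<open>Higher derivatives and complete monotonicity\<close>

definition monomial_deriv :: "nat \<Rightarrow> nat \<Rightarrow> real \<Rightarrow> real" where
  "monomial_deriv k l t = (\<Prod>j<l. real (k - j)) * t^(k - l)"

lemma monomial_deriv_0 [simp]: "monomial_deriv k 0 t = t^k"
  by (simp add: monomial_deriv_def)

lemma monomial_deriv_nonneg: "0 \<le> t \<Longrightarrow> 0 \<le> monomial_deriv k l t"
  by (simp add: monomial_deriv_def prod_nonneg)

lemma has_real_derivative_monomial_deriv: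
  "(monomial_deriv k l has_real_derivative monomial_deriv k (Suc l) t) (at t)"
proof -
  have "((\<lambda>t. (\<Prod>j<l. real (k - j)) * t^(k - l)) has_real_derivative
          (\<Prod>j<l. real (k - j)) * (real (k - l) * t^(k - l - Suc 0))) (at t)"
    by (intro DERIV_cmult DERIV_pow)
  then show ?thesis
    unfolding monomial_deriv_def [abs_def] by (simp add: mult.assoc)
qed

lemma sum_binomial_Suc_shift:
  fixes u v :: "nat \<Rightarrow> real"
  shows "(\<Sum>l\<le>n. real (n choose l) * (u (Suc l) * v (n - l) + u l * v (Suc (n - l))))
       = (\<Sum>l\<le>Suc n. real (Suc n choose l) * u l * v (Suc n - l))"
proof -
  have A: "(\<Sum>l\<le>Suc n. real (Suc n choose l) * u l * v (Suc n - l))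
      = u 0 * v (Suc n) + (\<Sum>l\<le>n. real (n choose l) * u (Suc l) * v (n - l))
        + (\<Sum>l\<le>n. real (n choose Suc l) * u (Suc l) * v (n - l))"
    by (subst sum.atMost_Suc_shift) (simp add: algebra_simps sum.distrib)
  have B: "(\<Sum>l\<le>n. real (n choose l) * u l * v (Suc (n - l)))
      = u 0 * v (Suc n) + (\<Sum>l\<le>n. real (n choose Suc l) * u (Suc l) * v (n - l))"
  proof (cases n)
    case (Suc m)
    have "(\<Sum>l\<le>n. real (n choose l) * u l * v (Suc (n - l)))
        = u 0 * v (Suc n) + (\<Sum>l\<le>m. real (n choose Suc l) * u (Suc l) * v (Suc (n - Suc l)))"
      unfolding Suc by (subst sum.atMost_Suc_shift) simp
    also have "(\<Sum>l\<le>m. real (n choose Suc l) * u (Suc l) * v (Suc (n - Suc l)))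
        = (\<Sum>l\<le>m. real (n choose Suc l) * u (Suc l) * v (n - l))"
      by (intro sum.cong) (auto simp: Suc Suc_diff_le)
    also have "\<dots> = (\<Sum>l\<le>n. real (n choose Suc l) * u (Suc l) * v (n - l))"
      unfolding Suc by (subst sum.atMost_Suc) (simp add: binomial_eq_0)
    finally show ?thesis .
  qed simp
  show ?thesis
    using A B by (simp add: algebra_simps sum.distrib)
qed

lemma has_real_derivative_Leibniz_sum:
  assumes "\<And>l. (u l has_real_derivative u (Suc l) t) (at t)"
    and "\<And>l. (v l has_real_derivative v (Suc l) t) (at t)"
  shows "((\<lambda>t. \<Sum>l\<le>n. real (n choose l) * u l t * v (n - l) t) has_real_derivative
          (\<Sum>l\<le>Suc n. real (Suc n choose l) * u l t * v (Suc n - l) t)) (at t)"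
proof -
  have "((\<lambda>t. \<Sum>l\<le>n. real (n choose l) * (u l t * v (n - l) t)) has_real_derivative
          (\<Sum>l\<le>n. real (n choose l) * (u l t * v (Suc (n - l)) t + u (Suc l) t * v (n - l) t))) (at t)"
    by (intro DERIV_sum DERIV_cmult DERIV_mult' assms)
  then show ?thesis
    using sum_binomial_Suc_shift[of n "\<lambda>l. u l t" "\<lambda>l. v l t"] by (simp add: algebra_simps)
qed

lemma has_real_derivative_suminf_termwise:
  fixes u :: "nat \<Rightarrow> nat \<Rightarrow> real \<Rightarrow> real"
  assumes der: "\<And>i r t. \<bar>t\<bar> < R \<Longrightarrow> (u i r has_real_derivative u i (Suc r) t) (at t)"
    and bound: "\<And>i r t. 0 < r \<Longrightarrow> \<bar>t\<bar> < R \<Longrightarrow> \<bar>u i r t\<bar> \<le> C r / (real i + 1)^2"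
    and "\<bar>t\<^sub>0\<bar> < R" "summable (\<lambda>i. u i 0 t\<^sub>0)"
    and "\<bar>t\<bar> < R"
  shows "summable (\<lambda>i. u i r t) \<and> ((\<lambda>t. \<Sum>i. u i r t) has_real_derivative (\<Sum>i. u i (Suc r) t)) (at t)"
proof -
  define \<rho> where "\<rho> = (max \<bar>t\<bar> \<bar>t\<^sub>0\<bar> + R) / 2"
  have \<rho>: "\<rho> < R" "\<bar>t\<bar> < \<rho>" "\<bar>t\<^sub>0\<bar> < \<rho>"
    using assms unfolding \<rho>_def by auto
  define S where "S = {-\<rho>..\<rho>}"
  have majorant: "summable (\<lambda>i. C r / (real i + 1)^2)" for r
    using summable_mult[OF sums_summable[OF inverse_squares_sums], of "C r"] by (simp add: add.commute)
  have bound_S: "\<bar>u i r x\<bar> \<le> C r / (real i + 1)^2" if "0 < r" "x \<in> S" for i r x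
    using bound[OF that(1)] that(2) \<rho>(1) by (auto simp: S_def)
  have uniform: "uniformly_convergent_on S (\<lambda>n x. \<Sum>i<n. u i (Suc r) x)"
    using bound_S by (intro Weierstrass_m_test'[OF _ majorant]) auto
  have deriv: "(u i r has_field_derivative u i (Suc r) x) (at x within S)" if "x \<in> S" for i x
    by (rule has_field_derivative_at_within, rule der) (use that \<rho> in \<open>auto simp: S_def\<close>)
  have "t\<^sub>0 \<in> S"
    using \<rho> by (auto simp: S_def)
  moreover have "summable (\<lambda>i. u i r t\<^sub>0)"
  proof (cases "r = 0")
    case False
    with bound_S \<open>t\<^sub>0 \<in> S\<close> show ?thesis
      by (intro summable_comparison_test[OF _ majorant]) auto
  qed (use assms(4) in simp)
  moreover have "convex S" "t \<in> interior S"
    using \<rho> by (auto simp: S_def)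
  ultimately show ?thesis
    using has_field_derivative_series'[OF _ deriv uniform] by blast
qed

lemma higher_deriv_reflected:
  fixes f :: "real \<Rightarrow> real" and F :: "nat \<Rightarrow> real \<Rightarrow> real"
  assumes "open U"
    and eq: "\<And>x. x \<in> U \<Longrightarrow> f x = F 0 (c - x)"
    and der: "\<And>n x. x \<in> U \<Longrightarrow> (F n has_real_derivative F (Suc n) (c - x)) (at (c - x))"
    and "x \<in> U"
  shows "((deriv ^^ n) f has_real_derivative (-1)^Suc n * F (Suc n) (c - x)) (at x)"
    and "(deriv ^^ n) f x = (-1)^n * F n (c - x)"
proof -
  define D where "D n x = (-1)^n * F n (c - x)" for n x
  have D_deriv: "(D n has_real_derivative D (Suc n) x) (at x)" if "x \<in> U" for n x
  proof -
    have "((\<lambda>x. F n (c - x)) has_real_derivative F (Suc n) (c - x) * (0 - 1)) (at x)"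
      using der[OF that] by (rule DERIV_chain2) (auto intro!: derivative_eq_intros)
    then show ?thesis
      unfolding D_def [abs_def] by (auto intro!: derivative_eq_intros)
  qed
  have deriv_D: "\<forall>x\<in>U. (deriv ^^ n) f x = D n x" for n
  proof (induction n)
    case 0
    then show ?case using eq by (simp add: D_def)
  next
    case (Suc n)
    show ?case
    proof
      fix x assume "x \<in> U"
      have "eventually (\<lambda>y. (deriv ^^ n) f y = D n y) (nhds x)"
        using Suc.IH \<open>open U\<close> \<open>x \<in> U\<close> by (intro eventually_nhds_in_open[THEN eventually_mono]) auto
      then have "((deriv ^^ n) f has_real_derivative D (Suc n) x) (at x)"
        using D_deriv[OF \<open>x \<in> U\<close>] by (subst DERIV_cong_ev[OF refl _ refl]) auto
      then show "(deriv ^^ Suc n) f x = D (Suc n) x"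
        by (simp add: DERIV_imp_deriv)
    qed
  qed
  then show "(deriv ^^ n) f x = (-1)^n * F n (c - x)"
    using \<open>x \<in> U\<close> by (simp add: D_def)
  have "eventually (\<lambda>y. (deriv ^^ n) f y = D n y) (nhds x)"
    using deriv_D \<open>open U\<close> \<open>x \<in> U\<close> by (intro eventually_nhds_in_open[THEN eventually_mono]) auto
  then have "((deriv ^^ n) f has_real_derivative D (Suc n) x) (at x)"
    using D_deriv[OF \<open>x \<in> U\<close>] by (subst DERIV_cong_ev[OF refl _ refl]) auto
  then show "((deriv ^^ n) f has_real_derivative (-1)^Suc n * F (Suc n) (c - x)) (at x)"
    by (simp only: D_def)
qed

lemma strictly_completely_monotonic_on_reflected:
  fixes f :: "real \<Rightarrow> real" and F :: "nat \<Rightarrow> real \<Rightarrow> real"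
  assumes "open U" "I \<subseteq> U"
    and eq: "\<And>x. x \<in> U \<Longrightarrow> f x = F 0 (c - x)"
    and der: "\<And>n x. x \<in> U \<Longrightarrow> (F n has_real_derivative F (Suc n) (c - x)) (at (c - x))"
    and pos: "\<And>n x. x \<in> I \<Longrightarrow> F n (c - x) > 0"
  shows "strictly_completely_monotonic_on I f"
  unfolding strictly_completely_monotonic_on_def
proof (intro conjI allI ballI)
  fix n x assume "x \<in> I"
  then have "x \<in> U"
    using assms by auto
  note higher_deriv = higher_deriv_reflected[OF \<open>open U\<close> eq der \<open>x \<in> U\<close>]
  show "((deriv ^^ n) f has_real_derivative (deriv ^^ Suc n) f x) (at x)"
    using higher_deriv[of n] higher_deriv(2)[of "Suc n"] by simp
  have "(-1)^n * (deriv ^^ n) f x = F n (c - x)"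
    using higher_deriv(2)[of n] by (simp flip: mult.assoc power_add)
  with pos[OF \<open>x \<in> I\<close>] show "(-1)^n * (deriv ^^ n) f x > 0"
    by simp
qed

section \<open>Reflection formulas and partial fractions of B and R\<close>

lemma Gamma_reflection_real:
  fixes x :: real
  shows "Gamma x * Gamma (1 - x) = pi / sin (pi * x)"
proof -
  have "Gamma (complex_of_real x) * Gamma (1 - complex_of_real x) = of_real pi / sin (of_real pi * of_real x)"
    by (rule Gamma_reflection_complex)
  moreover have "Gamma (1 - complex_of_real x) = of_real (Gamma (1 - x))"
    using Gamma_complex_of_real[of "1 - x"] by simp
  ultimately have "complex_of_real (Gamma x * Gamma (1 - x)) = complex_of_real (pi / sin (pi * x))"
    by (simp add: Gamma_complex_of_real flip: sin_of_real)
  then show ?thesis by (simp only: of_real_eq_iff)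
qed

lemma Beta_reflection: "Beta x (1 - x) = pi / sin (pi * x)" for x :: real
  using Gamma_reflection_real[of x] by (simp add: Beta_def)

lemma Digamma_reflection_real:
  fixes z :: real
  assumes z: "0 < z" "z < 1"
  shows "Digamma (1 - z) - Digamma z = pi * cos (pi * z) / sin (pi * z)"
proof -
  define h where "h y = Gamma y * Gamma (1 - y) * sin (pi * y)" for y :: real
  have h_const: "h y = pi" if "0 < y" "y < 1" for y
    using Gamma_reflection_real[of y] that sin_gt_zero[of "pi * y"] by (simp add: h_def)
  have not_pole: "y \<notin> \<int>\<^sub>\<le>\<^sub>0" if "0 < y" for y :: real
    using that by (auto elim!: nonpos_Ints_cases)
  have "(Gamma has_real_derivative Gamma z * Digamma z) (at z)"
    using not_pole[of z] z by (intro has_field_derivative_Gamma) auto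
  moreover have "((\<lambda>y. Gamma (1 - y)) has_real_derivative Gamma (1 - z) * Digamma (1 - z) * (-1)) (at z)"
    using not_pole[of "1 - z"] z
    by (intro DERIV_chain2[of Gamma] has_field_derivative_Gamma) (auto intro!: derivative_eq_intros)
  moreover have "((\<lambda>y. sin (pi * y)) has_real_derivative cos (pi * z) * pi) (at z)"
    by (auto intro!: derivative_eq_intros)
  ultimately have "(h has_real_derivative (Gamma z * Gamma (1 - z)) * (cos (pi * z) * pi)
      + (Gamma z * (Gamma (1 - z) * Digamma (1 - z) * (-1)) + Gamma z * Digamma z * Gamma (1 - z)) * sin (pi * z)) (at z)"
    unfolding h_def [abs_def] by (intro DERIV_mult')
  moreover have "eventually (\<lambda>y. h y = pi) (nhds z)"
    using z by (intro eventually_nhds_in_open[of "{0<..<1}", THEN eventually_mono]) (auto intro: h_const)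
  then have "(h has_real_derivative 0) (at z)"
    by (subst DERIV_cong_ev[OF refl _ refl]) (auto intro: DERIV_const)
  ultimately have "(Gamma z * Gamma (1 - z)) * (cos (pi * z) * pi)
      + (Gamma z * (Gamma (1 - z) * Digamma (1 - z) * (-1)) + Gamma z * Digamma z * Gamma (1 - z)) * sin (pi * z) = 0"
    by (rule DERIV_unique)
  then have "(Gamma z * Gamma (1 - z)) * ((Digamma z - Digamma (1 - z)) * sin (pi * z) + pi * cos (pi * z)) = 0"
    by (simp add: algebra_simps)
  moreover have "Gamma z > 0" "Gamma (1 - z) > 0"
    using z by simp_all
  ultimately have "(Digamma z - Digamma (1 - z)) * sin (pi * z) + pi * cos (pi * z) = 0"
    by simp
  moreover have "sin (pi * z) > 0"
    using z by (intro sin_gt_zero) auto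
  ultimately show ?thesis
    by (simp add: field_simps)
qed

lemma Beta_reflection_Digamma:
  fixes x :: real
  assumes x: "0 < x" "x < 1"
  shows "Beta x (1 - x) = (Digamma (1 - x/2) - Digamma (x/2) + Digamma ((1 + x)/2) - Digamma ((1 - x)/2)) / 2"
proof -
  define \<theta> where "\<theta> = pi * x / 2"
  have "pi * x < pi * 1"
    using x by (intro mult_strict_left_mono) auto
  then have \<theta>: "0 < \<theta>" "\<theta> < pi/2"
    using x unfolding \<theta>_def by auto
  then have sin_cos: "sin \<theta> > 0" "cos \<theta> > 0"
    by (auto intro: sin_gt_zero cos_gt_zero_pi)
  have first: "Digamma (1 - x/2) - Digamma (x/2) = pi * cos \<theta> / sin \<theta>"
    using Digamma_reflection_real[of "x/2"] x by (simp add: \<theta>_def)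
  have "Digamma (1 - (1 + x)/2) - Digamma ((1 + x)/2) = pi * cos (pi * ((1 + x)/2)) / sin (pi * ((1 + x)/2))"
    using x by (intro Digamma_reflection_real) auto
  moreover have "pi * ((1 + x)/2) = \<theta> + pi/2" "1 - (1 + x)/2 = (1 - x)/2"
    by (simp_all add: \<theta>_def field_simps)
  ultimately have "Digamma ((1 - x)/2) - Digamma ((1 + x)/2) = pi * cos (\<theta> + pi/2) / sin (\<theta> + pi/2)"
    by (simp only:)
  then have second: "Digamma ((1 - x)/2) - Digamma ((1 + x)/2) = - pi * sin \<theta> / cos \<theta>"
    by (simp add: cos_add sin_add)
  have "Beta x (1 - x) = pi / (2 * sin \<theta> * cos \<theta>)"
    using Beta_reflection[of x] sin_double[of \<theta>] by (simp add: \<theta>_def)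
  also have "\<dots> = (pi * cos \<theta> / sin \<theta> - (- pi * sin \<theta> / cos \<theta>)) / 2"
    using sin_cos sin_cos_squared_add3[of \<theta>] by (simp add: field_simps flip: distrib_left)
  finally show ?thesis
    using first second by simp
qed

lemma sums_Digamma:
  fixes z :: real
  assumes "z \<noteq> 0"
  shows "(\<lambda>k. 1/(real k + 1) - 1/(z + real k)) sums (Digamma z + euler_mascheroni)"
  using summable_Digamma[OF assms] by (simp add: Digamma_def summable_sums inverse_eq_divide add.commute)

definition half_int :: "nat \<Rightarrow> real" where
  "half_int k = real k + 1/2"

lemma pole_pair_half_int: "pole_pair 0 (half_int k) (1/2 - x) = 1/(real k + x) + 1/(real k + 1 - x)"
  by (simp add: pole_pair_0 half_int_def algebra_simps)

lemma pole_pair_half_int_tendsto_0: "(\<lambda>k. pole_pair 0 (half_int k) t) \<longlonglongrightarrow> 0"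
proof -
  have "(\<lambda>k. 1/((1/2 - t) + real k) + 1/((1/2 + t) + real k)) \<longlonglongrightarrow> 0 + 0"
    by (intro tendsto_add tendsto_divide_0[OF tendsto_const] filterlim_at_top_imp_at_infinity
        filterlim_tendsto_add_at_top[OF tendsto_const] filterlim_real_sequentially)
  then show ?thesis
    by (simp add: pole_pair_0 half_int_def algebra_simps)
qed

lemma RR_sums_pole_pairs:
  fixes x :: real
  assumes "0 < x" "x < 1"
  shows "(\<lambda>k. pole_pair 0 (half_int k) (1/2 - x) - 2/(real k + 1)) sums RR x (1 - x)"
proof -
  have "(\<lambda>k. - ((1/(real k + 1) - 1/(x + real k)) + (1/(real k + 1) - 1/((1 - x) + real k))))
      sums (- ((Digamma x + euler_mascheroni) + (Digamma (1 - x) + euler_mascheroni)))"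
    using assms by (intro sums_minus sums_add sums_Digamma) auto
  also have "- ((Digamma x + euler_mascheroni) + (Digamma (1 - x) + euler_mascheroni)) = RR x (1 - x)"
    by (simp add: RR_def)
  finally show ?thesis
    unfolding pole_pair_half_int by (simp add: algebra_simps)
qed

lemma Beta_sums_pole_pairs:
  fixes x :: real
  assumes "0 < x" "x < 1"
  shows "(\<lambda>i. pole_pair 0 (half_int (2*i)) (1/2 - x) - pole_pair 0 (half_int (2*i+1)) (1/2 - x))
           sums Beta x (1 - x)"
proof -
  have "1/(x/2 + real i) = 2/(real (2*i) + x)" "1/((1 - x/2) + real i) = 2/(real (2*i+1) + 1 - x)"
    "1/((1 - x)/2 + real i) = 2/(real (2*i) + 1 - x)" "1/((1 + x)/2 + real i) = 2/(real (2*i+1) + x)" for i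
    using assms by (simp_all add: field_simps)
  then have pole_pairs: "pole_pair 0 (half_int (2*i)) (1/2 - x) - pole_pair 0 (half_int (2*i+1)) (1/2 - x)
      = ((1/(x/2 + real i) - 1/((1 - x/2) + real i)) + (1/((1 - x)/2 + real i) - 1/((1 + x)/2 + real i))) / 2" for i
    unfolding pole_pair_half_int by simp
  have "(\<lambda>i. ((1/(x/2 + real i) - 1/((1 - x/2) + real i)) + (1/((1 - x)/2 + real i) - 1/((1 + x)/2 + real i))) / 2)
     sums (((Digamma (1 - x/2) - Digamma (x/2)) + (Digamma ((1 + x)/2) - Digamma ((1 - x)/2))) / 2)"
    using assms sums_diff[OF sums_Digamma sums_Digamma] by (intro sums_divide sums_add) auto
  also have "\<dots> = Beta x (1 - x)"
    using Beta_reflection_Digamma[OF assms] by simp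
  finally show ?thesis
    unfolding pole_pairs .
qed

lemma sums_pairs:
  fixes v :: "nat \<Rightarrow> real"
  assumes "v sums S"
  shows "(\<lambda>i. v (2*i) + v (2*i+1)) sums S"
  using sums_group[OF assms, of 2] by (simp add: mult.commute)

lemma sums_pairs_Suc:
  fixes v :: "nat \<Rightarrow> real"
  assumes "v sums S"
  shows "(\<lambda>i. v (2*i+1) + v (2*i+2)) sums (S - v 0)"
  using sums_pairs[of "\<lambda>k. v (Suc k)"] assms by (simp add: sums_Suc_iff numeral_2_eq_2)

lemma sums_pairs_shift:
  fixes u :: "nat \<Rightarrow> real"
  assumes "(\<lambda>i. u (2*i) + u (2*i+1)) sums S" "u \<longlonglongrightarrow> 0"
  shows "(\<lambda>i. u (2*i+1) + u (2*i+2)) sums (S - u 0)"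
proof -
  have pairs: "(\<Sum>i<n. u (2*i) + u (2*i+1)) = (\<Sum>k<2*n. u k)" for n
    by (induction n) (simp_all add: algebra_simps)
  have shifted_pairs: "(\<Sum>i<n. u (2*i+1) + u (2*i+2)) = (\<Sum>k<2*n. u k) + u (2*n) - u 0" for n
    by (induction n) (simp_all add: algebra_simps)
  have "(\<lambda>n. u (2*n)) \<longlonglongrightarrow> 0"
    using LIMSEQ_subseq_LIMSEQ[OF assms(2), of "\<lambda>n. 2*n"] by (simp add: strict_mono_def o_def)
  with assms(1) have "(\<lambda>n. (\<Sum>k<2*n. u k) + u (2*n) - u 0) \<longlonglongrightarrow> S + 0 - u 0"
    unfolding sums_def pairs by (intro tendsto_intros)
  then show ?thesis
    unfolding sums_def shifted_pairs by simp
qed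

section \<open>The function f\<close>

definition f_BR :: "real \<Rightarrow> real" where
  "f_BR x = (1 + x * (1 - x) - (x * (1 - x))^2) * Beta x (1 - x) - RR x (1 - x)"

definition f_poly :: "real \<Rightarrow> real" where
  "f_poly s = 19/16 - s/2 - s^2"

lemma f_poly_reflected: "f_poly ((1/2 - x)^2) = 1 + x * (1 - x) - (x * (1 - x))^2"
  unfolding f_poly_def by (simp add: field_simps power2_eq_square)

lemma f_poly_pole_pair_expansion:
  fixes a t c :: real
  assumes "a \<noteq> 0" "a \<noteq> t" "a \<noteq> -t"
  shows "(c * f_poly (t^2) - 1) * pole_pair 0 a t - (c * f_poly 0 - 1) * pole_pair 0 a 0
       = t^2 * (c * (19/(8*a^3) - 1/a) - 2/a^3) + t^4 * ((c * f_poly (a^2) - 1) / a^4) * pole_pair 0 a t"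
proof -
  define D where "D = a^2 - t^2"
  have "D \<noteq> 0"
    using assms by (simp add: D_def power2_eq_iff)
  moreover have "pole_pair 0 a t = 2*a/D"
    using assms by (simp add: D_def pole_pair_0_eq)
  moreover have "pole_pair 0 a 0 = 2/a" "t^2 = a^2 - D" "t^4 = (a^2 - D)^2"
    by (simp_all add: D_def pole_pair_0 flip: power_mult)
  ultimately show ?thesis
    using assms(1) unfolding f_poly_def by (simp add: field_simps) algebra
qed

definition f_pole_term :: "real \<Rightarrow> nat \<Rightarrow> real" where
  "f_pole_term t k = ((-1)^k * f_poly (t^2) - 1) * pole_pair 0 (half_int k) t + 2/(real k + 1)"

definition f_quad_coeff :: "nat \<Rightarrow> real" where
  "f_quad_coeff k = (-1)^k * (19/(8 * half_int k^3) - 1/half_int k) - 2/half_int k^3"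

definition f_weight :: "nat \<Rightarrow> real" where
  "f_weight k = ((-1)^k * f_poly (half_int k^2) - 1) / half_int k^4"

definition f_term :: "nat \<Rightarrow> nat \<Rightarrow> real \<Rightarrow> real" where
  "f_term i n t = f_weight (2*i+1) * pole_pair n (half_int (2*i+1)) t
                + f_weight (2*i+2) * pole_pair n (half_int (2*i+2)) t"

lemma f_BR_sums_pole_terms:
  fixes x :: real
  assumes "0 < x" "x < 1"
  shows "(\<lambda>i. f_pole_term (1/2 - x) (2*i+1) + f_pole_term (1/2 - x) (2*i+2))
           sums (f_BR x - f_pole_term (1/2 - x) 0)"
proof -
  define t where "t = 1/2 - x"
  define u where "u k = (-1)^k * pole_pair 0 (half_int k) t" for k
  define v where "v k = pole_pair 0 (half_int k) t - 2/(real k + 1)" for k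
  have "(\<lambda>i. u (2*i) + u (2*i+1)) sums Beta x (1 - x)"
    using Beta_sums_pole_pairs[OF assms] by (simp add: u_def t_def)
  moreover have "u \<longlonglongrightarrow> 0"
    unfolding u_def by (rule tendsto_norm_zero_cancel)
      (simp add: abs_mult tendsto_rabs_zero pole_pair_half_int_tendsto_0)
  ultimately have B: "(\<lambda>i. u (2*i+1) + u (2*i+2)) sums (Beta x (1 - x) - u 0)"
    by (rule sums_pairs_shift)
  have R: "(\<lambda>i. v (2*i+1) + v (2*i+2)) sums (RR x (1 - x) - v 0)"
    using sums_pairs_Suc[OF RR_sums_pole_pairs[OF assms]] by (simp add: v_def t_def)
  have pole_term: "f_pole_term t k = f_poly (t^2) * u k - v k" for k
    by (simp add: f_pole_term_def u_def v_def algebra_simps)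
  have "(\<lambda>i. f_pole_term t (2*i+1) + f_pole_term t (2*i+2))
      = (\<lambda>i. f_poly (t^2) * (u (2*i+1) + u (2*i+2)) - (v (2*i+1) + v (2*i+2)))"
    unfolding pole_term by (simp add: algebra_simps)
  also have "\<dots> sums (f_poly (t^2) * (Beta x (1 - x) - u 0) - (RR x (1 - x) - v 0))"
    by (intro sums_diff sums_mult B R)
  also have "f_poly (t^2) * (Beta x (1 - x) - u 0) - (RR x (1 - x) - v 0) = f_BR x - f_pole_term t 0"
    by (simp add: f_BR_def t_def f_poly_reflected f_pole_term_def u_def v_def algebra_simps)
  finally show ?thesis
    unfolding t_def .
qed

lemma f_pole_term_diff:
  assumes "\<bar>t\<bar> < 1/2"
  shows "f_pole_term t k - f_pole_term 0 k
           = t^2 * f_quad_coeff k + t^4 * f_weight k * pole_pair 0 (half_int k) t"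
proof -
  have "half_int k \<ge> 1/2"
    by (simp add: half_int_def)
  with assms show ?thesis
    using f_poly_pole_pair_expansion[of "half_int k" t "(-1)^k"]
    by (simp add: f_pole_term_def f_quad_coeff_def f_weight_def)
qed

lemma f_BR_diff_sums:
  fixes x :: real
  assumes "0 < x" "x < 1"
  defines "t \<equiv> 1/2 - x"
  shows "(\<lambda>i. t^2 * (f_quad_coeff (2*i+1) + f_quad_coeff (2*i+2)) + t^4 * f_term i 0 t)
           sums (f_BR x - f_BR (1/2) - t^2)"
proof -
  have "\<bar>t\<bar> < 1/2"
    using assms by (auto simp: t_def abs_if)
  have k0: "f_quad_coeff 0 = 1" "f_weight 0 = 0"
    by (simp_all add: f_quad_coeff_def f_weight_def f_poly_def half_int_def eval_nat_numeral)
  have "(\<lambda>i. (f_pole_term t (2*i+1) + f_pole_term t (2*i+2)) - (f_pole_term 0 (2*i+1) + f_pole_term 0 (2*i+2)))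
      sums ((f_BR x - f_pole_term t 0) - (f_BR (1/2) - f_pole_term 0 0))"
    using f_BR_sums_pole_terms[OF assms(1,2)] f_BR_sums_pole_terms[of "1/2"] by (intro sums_diff) (simp_all add: t_def)
  also have "(\<lambda>i. (f_pole_term t (2*i+1) + f_pole_term t (2*i+2)) - (f_pole_term 0 (2*i+1) + f_pole_term 0 (2*i+2)))
      = (\<lambda>i. t^2 * (f_quad_coeff (2*i+1) + f_quad_coeff (2*i+2)) + t^4 * f_term i 0 t)"
    using f_pole_term_diff[OF \<open>\<bar>t\<bar> < 1/2\<close>] by (simp add: f_term_def algebra_simps)
  also have "(f_BR x - f_pole_term t 0) - (f_BR (1/2) - f_pole_term 0 0) = f_BR x - f_BR (1/2) - t^2"
    using f_pole_term_diff[OF \<open>\<bar>t\<bar> < 1/2\<close>, of 0] k0 by simp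
  finally show ?thesis .
qed

definition f_quad :: real where
  "f_quad = 1 + (\<Sum>i. f_quad_coeff (2*i+1) + f_quad_coeff (2*i+2))"

definition cubic_pair :: "nat \<Rightarrow> real" where
  "cubic_pair i = 35/(8 * half_int (2*i+1)^3) - 3/(8 * half_int (2*i+2)^3)"

definition cubic_majorant :: "nat \<Rightarrow> real" where
  "cubic_majorant j = 1/(4 * (2 * real j + 1/2)^2)"

lemma f_quad_coeff_pair:
  "f_quad_coeff (2*i+1) + f_quad_coeff (2*i+2) = (1/half_int (2*i+1) - 1/half_int (2*i+2)) - cubic_pair i"
  by (simp add: f_quad_coeff_def cubic_pair_def algebra_simps)

lemma alternating_half_int_sums: "(\<lambda>i. 1/half_int (2*i+1) - 1/half_int (2*i+2)) sums (2 - pi/2)"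
proof -
  define u where "u k = (-1)^k / half_int k" for k
  have u_pairs: "u (2*i) = 1/half_int (2*i)" "u (2*i+1) = - (1/half_int (2*i+1))" "u (2*i+2) = 1/half_int (2*i+2)" for i
    by (simp_all add: u_def)
  have "(\<lambda>i. 2 * (u (2*i) + u (2*i+1))) sums Beta (1/2) (1 - 1/2)"
    using Beta_sums_pole_pairs[of "1/2"] unfolding u_pairs by (simp add: pole_pair_0)
  also have "Beta (1/2) (1 - 1/2) = pi"
    using Beta_reflection[of "1/2"] by simp
  finally have "(\<lambda>i. 2 * (u (2*i) + u (2*i+1))) sums pi" .
  from sums_mult_D[OF this] have pairs: "(\<lambda>i. u (2*i) + u (2*i+1)) sums (pi/2)"
    by simp
  have "(\<lambda>k. 1 / (real k + 1/2)) \<longlonglongrightarrow> 0"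
    by real_asymp
  moreover have "norm (u k) = 1 / (real k + 1/2)" for k
    by (simp add: u_def half_int_def)
  ultimately have "(\<lambda>k. norm (u k)) \<longlonglongrightarrow> 0"
    by simp
  then have "u \<longlonglongrightarrow> 0"
    by (rule tendsto_norm_zero_cancel)
  with pairs have "(\<lambda>i. u (2*i+1) + u (2*i+2)) sums (pi/2 - u 0)"
    by (rule sums_pairs_shift)
  from sums_minus[OF this] show ?thesis
    unfolding u_pairs by (simp add: u_def half_int_def)
qed

lemma inverse_cube_le_telescoping:
  fixes a :: real
  assumes "1 < a"
  shows "1/a^3 \<le> 1/(4*(a-1)^2) - 1/(4*(a+1)^2)"
proof -
  have "1 < a^2"
    using less_1_mult[OF assms assms] by (simp add: power2_eq_square)
  have "1/(4*(a-1)^2) - 1/(4*(a+1)^2) = a / ((a-1)^2 * (a+1)^2)"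
    using assms by (simp add: field_simps) algebra
  also have "(a-1)^2 * (a+1)^2 = (a^2 - 1)^2"
    by algebra
  finally have eq: "1/(4*(a-1)^2) - 1/(4*(a+1)^2) = a / (a^2 - 1)^2" .
  have "(a^2 - 1)^2 \<le> (a^2)^2"
    using \<open>1 < a^2\<close> by (intro power_mono) auto
  moreover have "0 < (a^2 - 1)^2"
    using \<open>1 < a^2\<close> by simp
  ultimately have "a / (a^2)^2 \<le> a / (a^2 - 1)^2"
    using assms by (intro divide_left_mono) auto
  moreover have "a / (a^2)^2 = 1/a^3"
    using assms by (simp add: power2_eq_square power3_eq_cube)
  ultimately show ?thesis
    unfolding eq by linarith
qed

lemma cubic_pair_bounds: "0 \<le> cubic_pair i" "cubic_pair i \<le> 35/8 * (cubic_majorant i - cubic_majorant (Suc i))"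
proof -
  define a where "a = half_int (2*i+1)"
  have a: "a = 2 * real i + 3/2" "half_int (2*i+2) = a + 1"
    by (simp_all add: a_def half_int_def)
  have "a^3 \<le> (a+1)^3"
    using a by (intro power_mono) auto
  then have "3/(8*(a+1)^3) \<le> 35/(8*a^3)"
    using a by (intro frac_le) auto
  then show "0 \<le> cubic_pair i"
    unfolding cubic_pair_def a_def [symmetric] a(2) by simp
  have "cubic_pair i \<le> 35/8 * (1/a^3)"
    unfolding cubic_pair_def a_def [symmetric] a(2) using a by simp
  also have "\<dots> \<le> 35/8 * (1/(4*(a-1)^2) - 1/(4*(a+1)^2))"
    using inverse_cube_le_telescoping[of a] a by simp
  also have "1/(4*(a-1)^2) - 1/(4*(a+1)^2) = cubic_majorant i - cubic_majorant (Suc i)"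
    unfolding cubic_majorant_def a(1) by (simp add: algebra_simps)
  finally show "cubic_pair i \<le> 35/8 * (cubic_majorant i - cubic_majorant (Suc i))" .
qed

lemma cubic_majorant_telescoping_sums:
  "(\<lambda>n. cubic_majorant (n + m) - cubic_majorant (Suc (n + m))) sums cubic_majorant m"
proof -
  have "cubic_majorant \<longlonglongrightarrow> 0"
    unfolding cubic_majorant_def by real_asymp
  then have "(\<lambda>n. cubic_majorant (n + m)) \<longlonglongrightarrow> 0"
    by (rule LIMSEQ_ignore_initial_segment)
  from telescope_sums'[OF this] show ?thesis by simp
qed

lemma summable_cubic_pair: "summable cubic_pair"
proof (rule summable_comparison_test)
  show "\<exists>N. \<forall>n\<ge>N. norm (cubic_pair n) \<le> 35/8 * (cubic_majorant n - cubic_majorant (Suc n))"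
    using cubic_pair_bounds by auto
  show "summable (\<lambda>n. 35/8 * (cubic_majorant n - cubic_majorant (Suc n)))"
    using cubic_majorant_telescoping_sums[of 0] by (intro summable_mult sums_summable) simp
qed

lemma suminf_cubic_pair_le: "suminf cubic_pair \<le> cubic_pair 0 + cubic_pair 1 + cubic_pair 2 + 35/8 * cubic_majorant 3"
proof -
  have tail: "(\<lambda>n. 35/8 * (cubic_majorant (n + 3) - cubic_majorant (Suc (n + 3)))) sums (35/8 * cubic_majorant 3)"
    by (intro sums_mult cubic_majorant_telescoping_sums)
  have "suminf cubic_pair = (\<Sum>n. cubic_pair (n + 3)) + (\<Sum>i<3. cubic_pair i)"
    by (rule suminf_split_initial_segment[OF summable_cubic_pair])
  also have "(\<Sum>n. cubic_pair (n + 3)) \<le> 35/8 * cubic_majorant 3"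
  proof (rule sums_le[OF _ summable_sums tail])
    show "cubic_pair (n + 3) \<le> 35/8 * (cubic_majorant (n + 3) - cubic_majorant (Suc (n + 3)))" for n
      by (rule cubic_pair_bounds(2))
    show "summable (\<lambda>n. cubic_pair (n + 3))"
      using summable_cubic_pair by simp
  qed
  also have "(\<Sum>i<3. cubic_pair i) = cubic_pair 0 + cubic_pair 1 + cubic_pair 2"
    by (simp add: eval_nat_numeral)
  finally show ?thesis by simp
qed

lemma f_quad_coeff_pairs_sums:
  "(\<lambda>i. f_quad_coeff (2*i+1) + f_quad_coeff (2*i+2)) sums (2 - pi/2 - suminf cubic_pair)"
  unfolding f_quad_coeff_pair
  by (intro sums_diff alternating_half_int_sums summable_sums summable_cubic_pair)

lemma f_quad_eq: "f_quad = 3 - pi/2 - suminf cubic_pair"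
  unfolding f_quad_def sums_unique[OF f_quad_coeff_pairs_sums, symmetric] by simp

text \<open>The margin is small: \<open>3 - pi/2 = 1.4292...\<close> against a bound of \<open>1.4210...\<close>, so the first
  three terms of \<open>cubic_pair\<close> have to be kept exactly.\<close>

lemma f_quad_nonneg: "f_quad \<ge> 0"
proof -
  have "3 - pi/2 - (cubic_pair 0 + cubic_pair 1 + cubic_pair 2 + 35/8 * cubic_majorant 3) \<ge> 0"
    using pi_approx by (simp add: cubic_pair_def half_int_def cubic_majorant_def power_divide)
  then show ?thesis
    using f_quad_eq suminf_cubic_pair_le by linarith
qed

lemma f_weight_odd: "f_weight (2*i+1) = (half_int (2*i+1)^4 + half_int (2*i+1)^2/2 - 35/16) / half_int (2*i+1)^4"
  unfolding f_weight_def f_poly_def by (simp add: power2_eq_square power4_eq_xxxx algebra_simps)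

lemma f_weight_even: "f_weight (2*i+2) = (3/16 - half_int (2*i+2)^2/2 - half_int (2*i+2)^4) / half_int (2*i+2)^4"
  unfolding f_weight_def f_poly_def by (simp add: power2_eq_square power4_eq_xxxx algebra_simps)

lemma f_weight_odd_bounds: "0 < f_weight (2*i+1)" "f_weight (2*i+1) \<le> 2"
proof -
  define a where "a = half_int (2*i+1)"
  have "a \<ge> 3/2"
    by (simp add: a_def half_int_def)
  then have "(3/2)^4 \<le> a^4" "a^2 \<le> a^4"
    by (intro power_mono power_increasing; simp)+
  then have "81/16 \<le> a^4"
    by (simp add: power_divide)
  then have "0 < a^4 + a^2/2 - 35/16" "a^4 + a^2/2 - 35/16 \<le> 2 * a^4"
    using zero_le_power2[of a] \<open>a^2 \<le> a^4\<close> by linarith+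
  moreover have "0 < a^4"
    using \<open>a \<ge> 3/2\<close> by simp
  ultimately show "0 < f_weight (2*i+1)" "f_weight (2*i+1) \<le> 2"
    unfolding f_weight_odd a_def [symmetric] by (simp_all add: pos_divide_le_eq)
qed

lemma f_weight_even_bounds: "f_weight (2*i+2) < 0" "-2 \<le> f_weight (2*i+2)"
proof -
  define b where "b = half_int (2*i+2)"
  have "b \<ge> 5/2"
    by (simp add: b_def half_int_def)
  then have "(5/2)^4 \<le> b^4" "b^2 \<le> b^4"
    by (intro power_mono power_increasing; simp)+
  then have "625/16 \<le> b^4"
    by (simp add: power_divide)
  then have "3/16 - b^2/2 - b^4 < 0" "-2 * b^4 \<le> 3/16 - b^2/2 - b^4"
    using zero_le_power2[of b] \<open>b^2 \<le> b^4\<close> by linarith+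
  moreover have "0 < b^4"
    using \<open>b \<ge> 5/2\<close> by simp
  ultimately show "f_weight (2*i+2) < 0" "-2 \<le> f_weight (2*i+2)"
    unfolding f_weight_even b_def [symmetric] by (simp_all add: divide_neg_pos pos_le_divide_eq)
qed

lemma f_weight_ratio: "- f_weight (2*i+2) / half_int (2*i+2) < f_weight (2*i+1) / half_int (2*i+1)"
proof (cases "i = 0")
  case True
  then show ?thesis
    unfolding f_weight_odd f_weight_even by (simp add: half_int_def power_divide)
next
  case False
  define a where "a = half_int (2*i+1)"
  have a: "a \<ge> 7/2" "half_int (2*i+2) = a + 1"
    using False by (simp_all add: a_def half_int_def)
  have "((b^4 + b^2/2 - 35/16) / b^4) / b = 1/b + 1/(2*b^3) - 35/(16*b^5)"
    "- ((3/16 - b^2/2 - b^4) / b^4) / b = 1/b + 1/(2*b^3) - 3/(16*b^5)" if "b > 0" for b :: real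
    using that by (simp_all add: field_simps eval_nat_numeral)
  then have odd: "f_weight (2*i+1) / half_int (2*i+1) = 1/a + 1/(2*a^3) - 35/(16*a^5)"
    and even: "- f_weight (2*i+2) / half_int (2*i+2) = 1/(a+1) + 1/(2*(a+1)^3) - 3/(16*(a+1)^5)"
    unfolding f_weight_odd f_weight_even a_def [symmetric] a(2) using a by simp_all
  have "(7/2)^3 \<le> a^3"
    using a by (intro power_mono) auto
  then have "343/8 * a \<le> a^3 * a"
    using a by (intro mult_right_mono) (auto simp: power_divide)
  then have "16 * a^4 > 35 * (a + 1)"
    using a by (simp add: mult.commute flip: power_Suc)
  then have "a * (35 * (a + 1)) < a * (16 * a^4)"
    using a by (intro mult_strict_left_mono) auto
  then have "35 * (a + a*a) < 16 * a^5"
    by (simp add: algebra_simps eval_nat_numeral)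
  moreover have "a + a*a > 0"
    using a by (simp add: add_pos_pos)
  ultimately have "35/(16*a^5) < 1/(a*(a+1))"
    using a by (simp add: field_simps)
  moreover have "1/(2*(a+1)^3) \<le> 1/(2*a^3)" "0 \<le> 3/(16*(a+1)^5)" "1/a - 1/(a+1) = 1/(a*(a+1))"
    using a by (auto intro!: frac_le power_mono simp: field_simps)
  ultimately show ?thesis
    unfolding odd even by linarith
qed

lemma lincomb_pole_pair_pos:
  assumes "0 < t" "t < a" "a \<le> b" "0 < A" "- C / b < A / a"
  shows "A * pole_pair n a t + C * pole_pair n b t > 0"
proof -
  have "0 < a" "0 < pole_pair n b t"
    using assms by (auto intro: pole_pair_pos)
  have "- C * pole_pair n b t = (- C / b) * (b * pole_pair n b t)"
    using assms \<open>0 < a\<close> by simp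
  also have "\<dots> < (A / a) * (b * pole_pair n b t)"
    using assms \<open>0 < a\<close> \<open>0 < pole_pair n b t\<close> by (intro mult_strict_right_mono) auto
  also have "\<dots> \<le> (A / a) * (a * pole_pair n a t)"
    using assms \<open>0 < a\<close> by (intro mult_left_mono mult_pole_pair_antimono) auto
  also have "\<dots> = A * pole_pair n a t"
    using \<open>0 < a\<close> by simp
  finally show ?thesis by simp
qed

lemma f_term_pos: "0 < t \<Longrightarrow> t < 3/2 \<Longrightarrow> f_term i n t > 0"
  unfolding f_term_def using f_weight_odd_bounds(1) f_weight_ratio
  by (intro lincomb_pole_pair_pos) (auto simp: half_int_def)

lemma has_real_derivative_f_term:
  "\<bar>t\<bar> < 3/2 \<Longrightarrow> (f_term i n has_real_derivative f_term i (Suc n) t) (at t)"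
  unfolding f_term_def [abs_def]
  by (intro DERIV_add DERIV_cmult has_real_derivative_pole_pair) (auto simp: half_int_def)

lemma abs_f_term_le:
  assumes "0 < n" "\<bar>t\<bar> < 1/2"
  shows "\<bar>f_term i n t\<bar> \<le> 8 * fact n / (real i + 1)^2"
  unfolding f_term_def using assms f_weight_odd_bounds[of i] f_weight_even_bounds[of i]
  by (intro abs_lincomb_pole_pair_le[where \<rho> = "\<bar>t\<bar>"]) (auto simp: half_int_def)

definition f_rem :: "nat \<Rightarrow> real \<Rightarrow> real" where
  "f_rem n t = (\<Sum>i. f_term i n t)"

lemma f_term_series_has_real_derivative:
  assumes "\<bar>t\<bar> < 1/2"
  shows "summable (\<lambda>i. f_term i n t) \<and> (f_rem n has_real_derivative f_rem (Suc n) t) (at t)"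
  unfolding f_rem_def [abs_def]
proof (rule has_real_derivative_suminf_termwise[where R = "1/2" and C = "\<lambda>n. 8 * fact n" and t\<^sub>0 = "1/4"])
  have "(\<lambda>i. (1/4)^2 * (f_quad_coeff (2*i+1) + f_quad_coeff (2*i+2)) + (1/4)^4 * f_term i 0 (1/4))
      sums (f_BR (1/4) - f_BR (1/2) - (1/4)^2)"
    using f_BR_diff_sums[of "1/4"] by simp
  moreover have "summable (\<lambda>i. (1/4)^2 * (f_quad_coeff (2*i+1) + f_quad_coeff (2*i+2)))"
    using f_quad_coeff_pairs_sums by (intro summable_mult sums_summable)
  ultimately have "summable (\<lambda>i. (1/4::real)^4 * f_term i 0 (1/4))"
    using summable_diff sums_summable by fastforce
  then show "summable (\<lambda>i. f_term i 0 (1/4))"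
    by (subst (asm) summable_cmult_iff) auto
qed (use assms abs_f_term_le has_real_derivative_f_term in auto)

lemma f_rem_pos: "0 < t \<Longrightarrow> t < 1/2 \<Longrightarrow> f_rem n t > 0"
  unfolding f_rem_def using f_term_series_has_real_derivative[of t n] f_term_pos[of t]
  by (intro suminf_pos) auto

lemma f_BR_eq:
  assumes "0 < x" "x < 1"
  shows "f_BR x = f_BR (1/2) + f_quad * (1/2 - x)^2 + (1/2 - x)^4 * f_rem 0 (1/2 - x)"
proof -
  define t where "t = 1/2 - x"
  have "\<bar>t\<bar> < 1/2"
    using assms by (auto simp: t_def abs_if)
  have "f_quad - 1 = 2 - pi/2 - suminf cubic_pair"
    using f_quad_eq by simp
  then have "(\<lambda>i. f_quad_coeff (2*i+1) + f_quad_coeff (2*i+2)) sums (f_quad - 1)"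
    using f_quad_coeff_pairs_sums by (simp only:)
  then have "(\<lambda>i. t^2 * (f_quad_coeff (2*i+1) + f_quad_coeff (2*i+2)) + t^4 * f_term i 0 t)
      sums (t^2 * (f_quad - 1) + t^4 * f_rem 0 t)"
    using f_term_series_has_real_derivative[OF \<open>\<bar>t\<bar> < 1/2\<close>, of 0]
    unfolding f_rem_def by (intro sums_add sums_mult summable_sums) auto
  with f_BR_diff_sums[OF assms] show ?thesis
    unfolding t_def [symmetric] by (simp add: sums_iff algebra_simps)
qed

lemma f_BR_half_pos: "f_BR (1/2) > 0"
proof -
  have "Beta (1/2) (1 - 1/2) = pi"
    using Beta_reflection[of "1/2"] by simp
  moreover have "RR (1/2) (1 - 1/2) = 4 * ln 2"
    unfolding RR_def using Digamma_one_half[where 'a=real] by simp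
  ultimately have "f_BR (1/2) = 19/16 * pi - 4 * ln 2"
    unfolding f_BR_def by (simp add: power_divide)
  then show ?thesis
    using pi_gt3 ln2_le_25_over_36 by linarith
qed

text \<open>The \<open>n\<close>-th derivative of \<open>t \<mapsto> f_BR (1/2 - t)\<close>, obtained from \<open>f_BR_eq\<close> by Leibniz's rule.\<close>

definition f_reflected_deriv :: "nat \<Rightarrow> real \<Rightarrow> real" where
  "f_reflected_deriv n t = f_BR (1/2) * monomial_deriv 0 n t + f_quad * monomial_deriv 2 n t
     + (\<Sum>l\<le>n. real (n choose l) * monomial_deriv 4 l t * f_rem (n - l) t)"

lemma f_BR_strictly_completely_monotonic: "strictly_completely_monotonic_on {0<..<1/2} f_BR"
proof (rule strictly_completely_monotonic_on_reflected[where U = "{0<..<1}" and c = "1/2"])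
  show "f_BR x = f_reflected_deriv 0 (1/2 - x)" if "x \<in> {0<..<1}" for x
    using f_BR_eq[of x] that by (simp add: f_reflected_deriv_def)
next
  fix n and x :: real
  assume "x \<in> {0<..<1}"
  then have "\<bar>1/2 - x\<bar> < 1/2"
    by (auto simp: abs_if)
  note f_rem_deriv = f_term_series_has_real_derivative[OF this, THEN conjunct2]
  show "(f_reflected_deriv n has_real_derivative f_reflected_deriv (Suc n) (1/2 - x)) (at (1/2 - x))"
    unfolding f_reflected_deriv_def [abs_def]
    by (intro DERIV_add DERIV_cmult has_real_derivative_monomial_deriv
        has_real_derivative_Leibniz_sum[where u = "monomial_deriv 4" and v = f_rem] f_rem_deriv)
next
  fix n and x :: real
  assume "x \<in> {0<..<1/2}"
  then have t: "0 < 1/2 - x" "1/2 - x < 1/2"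
    by auto
  have "0 \<le> monomial_deriv 4 l (1/2 - x)" "0 \<le> f_rem (n - l) (1/2 - x)" for l
    using t f_rem_pos[OF t] by (simp_all add: monomial_deriv_nonneg less_imp_le)
  then have "0 \<le> real (n choose l) * monomial_deriv 4 l (1/2 - x) * f_rem (n - l) (1/2 - x)" for l
    by simp
  moreover have "0 < real (n choose 0) * monomial_deriv 4 0 (1/2 - x) * f_rem (n - 0) (1/2 - x)"
    using t f_rem_pos[OF t] by simp
  ultimately have "0 < (\<Sum>l\<le>n. real (n choose l) * monomial_deriv 4 l (1/2 - x) * f_rem (n - l) (1/2 - x))"
    by (intro sum_pos2[of "{..n}" 0]) auto
  moreover have "0 \<le> f_BR (1/2) * monomial_deriv 0 n (1/2 - x)" "0 \<le> f_quad * monomial_deriv 2 n (1/2 - x)"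
    using t f_BR_half_pos f_quad_nonneg by (simp_all add: monomial_deriv_nonneg)
  ultimately show "f_reflected_deriv n (1/2 - x) > 0"
    unfolding f_reflected_deriv_def by linarith
qed auto

section \<open>The function g\<close>

definition g_BR :: "real \<Rightarrow> real" where
  "g_BR x = RR x (1 - x) - Beta x (1 - x) / (1 + x * (1 - x))"

text \<open>At \<open>x = 1/2 - t\<close> one has \<open>1 + x * (1 - x) = 5/4 - t^2\<close>.\<close>

definition g_recip :: "real \<Rightarrow> real" where
  "g_recip t = 1/(5/4 - t^2)"

definition g_pole_term :: "real \<Rightarrow> nat \<Rightarrow> real" where
  "g_pole_term t k = (1 - (-1)^k * g_recip t) * pole_pair 0 (half_int k) t - 2/(real k + 1)"

definition g_weight :: "nat \<Rightarrow> real" where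
  "g_weight k = 1 + (-1)^k / (half_int k^2 - 5/4)"

definition g_pole_coeff :: "real \<Rightarrow> real" where
  "g_pole_coeff a = 2*a/(a^2 - 5/4)"

lemma g_recip_pole_pair_expansion:
  fixes a t c :: real
  assumes "a \<noteq> 0" "a^2 \<noteq> 5/4" "a \<noteq> t" "a \<noteq> -t" "t^2 \<noteq> 5/4"
  shows "(1 - c * g_recip t) * pole_pair 0 a t - (1 - c * g_recip 0) * pole_pair 0 a 0
       = (1 + c/(a^2 - 5/4)) * (pole_pair 0 a t - 2/a) - c * g_pole_coeff a * (g_recip t - 4/5)"
proof -
  define D where "D = a^2 - t^2"
  define d where "d = a^2 - 5/4"
  define Q where "Q = 5/4 - t^2"
  have relations: "Q = D - d" "a^2 = d + 5/4"
    by (simp_all add: D_def d_def Q_def)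
  have nonzero: "D \<noteq> 0" "d \<noteq> 0" "Q \<noteq> 0"
    using assms by (auto simp: D_def d_def Q_def power2_eq_iff)
  have "((1 - c/Q) * (2*a/D) - (1 - c * (4/5)) * (2/a)) * (5*a*D*d*Q)
      = ((1 + c/d) * (2*a/D - 2/a) - c * (2*a/d) * (1/Q - 4/5)) * (5*a*D*d*Q)"
    using assms(1) nonzero by (simp add: field_simps) (use relations in algebra)
  then have main: "(1 - c/Q) * (2*a/D) - (1 - c * (4/5)) * (2/a)
      = (1 + c/d) * (2*a/D - 2/a) - c * (2*a/d) * (1/Q - 4/5)"
    using assms(1) nonzero by simp
  have "pole_pair 0 a t = 2*a/D"
    using assms by (simp add: D_def pole_pair_0_eq)
  moreover have "pole_pair 0 a 0 = 2/a" "g_recip t = 1/Q" "g_recip 0 = 4/5" "g_pole_coeff a = 2*a/d"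
    by (simp_all add: pole_pair_0 g_recip_def Q_def g_pole_coeff_def d_def)
  ultimately show ?thesis
    using main by (simp only: d_def [symmetric]) simp
qed

definition g_kappa :: "nat \<Rightarrow> real" where
  "g_kappa i = g_pole_coeff (half_int (2*i+1)) - g_pole_coeff (half_int (2*i))"

definition g_term :: "nat \<Rightarrow> nat \<Rightarrow> real \<Rightarrow> real" where
  "g_term i n t = g_weight (2*i) * pole_pair_centered n (half_int (2*i)) t
                + g_weight (2*i+1) * pole_pair_centered n (half_int (2*i+1)) t"

lemma g_BR_sums_pole_terms:
  fixes x :: real
  assumes "0 < x" "x < 1"
  shows "(\<lambda>i. g_pole_term (1/2 - x) (2*i) + g_pole_term (1/2 - x) (2*i+1)) sums g_BR x"
proof -
  define t where "t = 1/2 - x"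
  define v where "v k = pole_pair 0 (half_int k) t - 2/(real k + 1)" for k
  have "5/4 - t^2 = 1 + x * (1 - x)"
    by (simp add: t_def power2_eq_square algebra_simps)
  then have g_BR_eq: "RR x (1 - x) - g_recip t * Beta x (1 - x) = g_BR x"
    by (simp add: g_BR_def g_recip_def)
  have pole_term: "g_pole_term t k = v k - (-1)^k * g_recip t * pole_pair 0 (half_int k) t" for k
    by (simp add: g_pole_term_def v_def algebra_simps)
  have "(\<lambda>i. g_pole_term t (2*i) + g_pole_term t (2*i+1))
      = (\<lambda>i. (v (2*i) + v (2*i+1))
           - g_recip t * (pole_pair 0 (half_int (2*i)) t - pole_pair 0 (half_int (2*i+1)) t))"
    unfolding pole_term by (simp add: algebra_simps)
  also have "\<dots> sums (RR x (1 - x) - g_recip t * Beta x (1 - x))"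
    using sums_pairs[OF RR_sums_pole_pairs[OF assms]] Beta_sums_pole_pairs[OF assms]
    unfolding v_def t_def by (intro sums_diff sums_mult) auto
  also note g_BR_eq
  finally show ?thesis
    unfolding t_def .
qed

lemma half_int_square_ne: "half_int k^2 \<noteq> 5/4"
proof (cases k)
  case (Suc m)
  have "(3/2)^2 \<le> half_int k^2"
    by (intro power_mono) (simp_all add: half_int_def Suc)
  then show ?thesis
    by (auto simp: power_divide)
qed (simp add: half_int_def power2_eq_square)

lemma g_pole_term_diff:
  assumes "\<bar>t\<bar> < 1/2"
  shows "g_pole_term t k - g_pole_term 0 k
           = g_weight k * pole_pair_centered 0 (half_int k) t - (-1)^k * g_pole_coeff (half_int k) * (g_recip t - 4/5)"
proof -
  have "half_int k \<ge> 1/2"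
    by (simp add: half_int_def)
  moreover have "\<bar>t\<bar>^2 < (1/2)^2"
    using assms by (intro power_strict_mono) auto
  then have "t^2 < 1/4"
    by (simp add: power_divide)
  ultimately show ?thesis
    using g_recip_pole_pair_expansion[of "half_int k" t "(-1)^k"] assms half_int_square_ne[of k]
    by (simp add: g_pole_term_def g_weight_def pole_pair_centered_def pole_pair_0 algebra_simps)
qed

lemma g_BR_diff_sums:
  fixes x :: real
  assumes "0 < x" "x < 1"
  defines "t \<equiv> 1/2 - x"
  shows "(\<lambda>i. g_term i 0 t + g_kappa i * (g_recip t - 4/5)) sums (g_BR x - g_BR (1/2))"
proof -
  have "\<bar>t\<bar> < 1/2"
    using assms by (auto simp: t_def abs_if)
  have "(\<lambda>i. (g_pole_term t (2*i) + g_pole_term t (2*i+1)) - (g_pole_term 0 (2*i) + g_pole_term 0 (2*i+1)))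
      sums (g_BR x - g_BR (1/2))"
    using g_BR_sums_pole_terms[OF assms(1,2)] g_BR_sums_pole_terms[of "1/2"] by (intro sums_diff) (simp_all add: t_def)
  also have "(\<lambda>i. (g_pole_term t (2*i) + g_pole_term t (2*i+1)) - (g_pole_term 0 (2*i) + g_pole_term 0 (2*i+1)))
      = (\<lambda>i. (g_pole_term t (2*i) - g_pole_term 0 (2*i)) + (g_pole_term t (2*i+1) - g_pole_term 0 (2*i+1)))"
    by (simp add: algebra_simps)
  also have "\<dots> = (\<lambda>i. g_term i 0 t + g_kappa i * (g_recip t - 4/5))"
    unfolding g_pole_term_diff[OF \<open>\<bar>t\<bar> < 1/2\<close>] by (simp add: g_term_def g_kappa_def algebra_simps)
  finally show ?thesis .
qed

definition g_K :: real where
  "g_K = (\<Sum>i. g_kappa i)"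

definition g_kappa_majorant :: "nat \<Rightarrow> real" where
  "g_kappa_majorant j = g_pole_coeff (half_int (2*j+2))"

lemma g_pole_coeff_antimono:
  assumes "5/2 \<le> a" "a \<le> b"
  shows "g_pole_coeff b \<le> g_pole_coeff a"
proof -
  have "(5/2)^2 \<le> a^2" "(5/2)^2 \<le> b^2"
    using assms by (intro power_mono; simp)+
  then have "a^2 - 5/4 > 0" "b^2 - 5/4 > 0"
    by (simp_all add: power_divide)
  moreover have "2*a*(b^2 - 5/4) - 2*b*(a^2 - 5/4) = 2 * ((b - a) * (a * b + 5/4))"
    by (simp add: field_simps power2_eq_square)
  moreover have "(b - a) * (a * b + 5/4) \<ge> 0"
    using assms by (intro mult_nonneg_nonneg) auto
  ultimately show ?thesis
    unfolding g_pole_coeff_def by (simp add: divide_simps)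
qed

lemma g_kappa_Suc_bounds:
  "- (g_kappa_majorant j - g_kappa_majorant (Suc j)) \<le> g_kappa (Suc j)" "g_kappa (Suc j) \<le> 0"
proof -
  have "5/2 \<le> half_int (2*j+2)" "half_int (2*j+2) \<le> half_int (2*j+3)" "half_int (2*j+3) \<le> half_int (2*j+4)"
    by (simp_all add: half_int_def)
  then have "g_pole_coeff (half_int (2*j+3)) \<le> g_pole_coeff (half_int (2*j+2))"
    "g_pole_coeff (half_int (2*j+4)) \<le> g_pole_coeff (half_int (2*j+3))"
    by (intro g_pole_coeff_antimono; linarith)+
  moreover have "g_kappa (Suc j) = g_pole_coeff (half_int (2*j+3)) - g_pole_coeff (half_int (2*j+2))"
    "g_kappa_majorant (Suc j) = g_pole_coeff (half_int (2*j+4))"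
  proof -
    have "2 * Suc j + 1 = 2*j+3" "2 * Suc j = 2*j+2" "2 * Suc j + 2 = 2*j+4"
      by simp_all
    then show "g_kappa (Suc j) = g_pole_coeff (half_int (2*j+3)) - g_pole_coeff (half_int (2*j+2))"
      "g_kappa_majorant (Suc j) = g_pole_coeff (half_int (2*j+4))"
      unfolding g_kappa_def g_kappa_majorant_def by (simp_all only:)
  qed
  ultimately show "- (g_kappa_majorant j - g_kappa_majorant (Suc j)) \<le> g_kappa (Suc j)" "g_kappa (Suc j) \<le> 0"
    by (simp_all add: g_kappa_majorant_def)
qed

lemma g_kappa_majorant_telescoping_sums: "(\<lambda>j. g_kappa_majorant j - g_kappa_majorant (Suc j)) sums 1"
proof -
  have "g_kappa_majorant \<longlonglongrightarrow> 0"
    unfolding g_kappa_majorant_def g_pole_coeff_def half_int_def by real_asymp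
  moreover have "g_kappa_majorant 0 = 1"
    by (simp add: g_kappa_majorant_def g_pole_coeff_def half_int_def power2_eq_square)
  ultimately show ?thesis
    using telescope_sums' by fastforce
qed

lemma summable_g_kappa: "summable g_kappa"
proof -
  have "summable (\<lambda>j. g_kappa (Suc j))"
  proof (rule summable_comparison_test)
    have "norm (g_kappa (Suc n)) \<le> g_kappa_majorant n - g_kappa_majorant (Suc n)" for n
      using g_kappa_Suc_bounds[of n] by (simp add: abs_of_nonpos)
    then show "\<exists>N. \<forall>n\<ge>N. norm (g_kappa (Suc n)) \<le> g_kappa_majorant n - g_kappa_majorant (Suc n)"
      by blast
    show "summable (\<lambda>n. g_kappa_majorant n - g_kappa_majorant (Suc n))"
      using g_kappa_majorant_telescoping_sums by (rule sums_summable)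
  qed
  then show ?thesis
    by (subst (asm) summable_Suc_iff)
qed

lemma g_K_nonneg: "g_K \<ge> 0"
proof -
  have "g_K = (\<Sum>j. g_kappa (Suc j)) + g_kappa 0"
    unfolding g_K_def using suminf_split_head[OF summable_g_kappa] by simp
  moreover have "g_kappa 0 = 4"
    by (simp add: g_kappa_def g_pole_coeff_def half_int_def power2_eq_square)
  moreover have "(\<Sum>j. - (g_kappa_majorant j - g_kappa_majorant (Suc j))) \<le> (\<Sum>j. g_kappa (Suc j))"
  proof (rule suminf_le)
    show "summable (\<lambda>j. - (g_kappa_majorant j - g_kappa_majorant (Suc j)))"
      using g_kappa_majorant_telescoping_sums by (intro summable_minus sums_summable)
    show "summable (\<lambda>j. g_kappa (Suc j))"
      using summable_g_kappa by (simp add: summable_Suc_iff)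
  qed (rule g_kappa_Suc_bounds(1))
  moreover have "(\<Sum>j. - (g_kappa_majorant j - g_kappa_majorant (Suc j))) = -1"
    using sums_minus[OF g_kappa_majorant_telescoping_sums] by (simp add: sums_iff)
  ultimately show ?thesis by simp
qed

lemma g_weight_0_1: "g_weight 0 = 0" "g_weight 1 = 0"
  by (simp_all add: g_weight_def half_int_def power2_eq_square)

lemma g_weight_large: "2 \<le> k \<Longrightarrow> 0 < g_weight k \<and> g_weight k \<le> 2"
proof -
  assume "2 \<le> k"
  define X where "X = (-1)^k / (half_int k^2 - 5/4)"
  have "(5/2)^2 \<le> half_int k^2"
    using \<open>2 \<le> k\<close> by (intro power_mono) (auto simp: half_int_def)
  then have "5 \<le> half_int k^2 - 5/4"
    by (simp add: power_divide)
  then have "\<bar>X\<bar> \<le> 1/5"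
    unfolding X_def by (simp add: divide_le_eq)
  then have "X \<le> 1/5" "- X \<le> 1/5"
    by (simp_all only: abs_le_iff)
  then show ?thesis
    unfolding g_weight_def X_def [symmetric] by simp
qed

lemma g_weight_bounds: "0 \<le> g_weight k" "g_weight k \<le> 2"
proof -
  have "0 \<le> g_weight k \<and> g_weight k \<le> 2"
  proof (cases "2 \<le> k")
    case False
    then have "k = 0 \<or> k = 1"
      by auto
    then show ?thesis
      using g_weight_0_1 by auto
  qed (use g_weight_large in fastforce)
  then show "0 \<le> g_weight k" "g_weight k \<le> 2"
    by auto
qed

lemma pole_pair_centered_half_int_nonneg: "0 < t \<Longrightarrow> t < 1/2 \<Longrightarrow> 0 \<le> pole_pair_centered n (half_int k) t"
  by (intro less_imp_le pole_pair_centered_pos) (auto simp: half_int_def)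

lemma g_term_nonneg: "0 < t \<Longrightarrow> t < 1/2 \<Longrightarrow> 0 \<le> g_term i n t"
  unfolding g_term_def using g_weight_bounds(1) pole_pair_centered_half_int_nonneg
  by simp

lemma g_term_1_pos:
  assumes "0 < t" "t < 1/2"
  shows "0 < g_term 1 n t"
proof -
  have "0 < g_weight 2 * pole_pair_centered n (half_int 2) t"
    using assms g_weight_large[of 2] by (intro mult_pos_pos pole_pair_centered_pos) (auto simp: half_int_def)
  moreover have "0 \<le> g_weight 3 * pole_pair_centered n (half_int 3) t"
    using assms g_weight_bounds(1) pole_pair_centered_half_int_nonneg by simp
  ultimately show ?thesis
    by (simp add: g_term_def numeral_3_eq_3)
qed

lemma has_real_derivative_g_term:
  "\<bar>t\<bar> < 1/2 \<Longrightarrow> (g_term i n has_real_derivative g_term i (Suc n) t) (at t)"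
  unfolding g_term_def [abs_def]
  by (intro DERIV_add DERIV_cmult has_real_derivative_pole_pair_centered) (auto simp: half_int_def)

lemma abs_g_term_le:
  assumes "0 < n" "\<bar>t\<bar> < 1/2"
  shows "\<bar>g_term i n t\<bar> \<le> 8 * fact n / (real i + 1)^2"
proof (cases "i = 0")
  case False
  have "g_term i n t = g_weight (2*i) * pole_pair n (half_int (2*i)) t
      + g_weight (2*i+1) * pole_pair n (half_int (2*i+1)) t"
    using assms(1) by (simp add: g_term_def pole_pair_centered_def)
  also have "\<bar>\<dots>\<bar> \<le> 8 * fact n / (real i + 1)^2"
    using False assms g_weight_bounds
    by (intro abs_lincomb_pole_pair_le[where \<rho> = "\<bar>t\<bar>"]) (auto simp: half_int_def)
  finally show ?thesis .
qed (use g_weight_0_1 in \<open>simp add: g_term_def\<close>)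

definition g_rem :: "nat \<Rightarrow> real \<Rightarrow> real" where
  "g_rem n t = (\<Sum>i. g_term i n t)"

lemma g_term_series_has_real_derivative:
  assumes "\<bar>t\<bar> < 1/2"
  shows "summable (\<lambda>i. g_term i n t) \<and> (g_rem n has_real_derivative g_rem (Suc n) t) (at t)"
  unfolding g_rem_def [abs_def]
proof (rule has_real_derivative_suminf_termwise[where R = "1/2" and C = "\<lambda>n. 8 * fact n" and t\<^sub>0 = "1/4"])
  have "(\<lambda>i. g_term i 0 (1/4) + g_kappa i * (g_recip (1/4) - 4/5)) sums (g_BR (1/4) - g_BR (1/2))"
    using g_BR_diff_sums[of "1/4"] by simp
  moreover have "summable (\<lambda>i. g_kappa i * (g_recip (1/4) - 4/5))"
    using summable_g_kappa by (rule summable_mult2)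
  ultimately show "summable (\<lambda>i. g_term i 0 (1/4))"
    using summable_diff sums_summable by fastforce
qed (use assms abs_g_term_le has_real_derivative_g_term in auto)

lemma g_rem_pos: "0 < t \<Longrightarrow> t < 1/2 \<Longrightarrow> g_rem n t > 0"
  unfolding g_rem_def using g_term_series_has_real_derivative[of t n] g_term_nonneg[of t] g_term_1_pos[of t]
  by (intro suminf_pos2[where i = 1]) auto

lemma g_BR_eq:
  assumes "0 < x" "x < 1"
  shows "g_BR x = g_BR (1/2) + g_K * (g_recip (1/2 - x) - 4/5) + g_rem 0 (1/2 - x)"
proof -
  define t where "t = 1/2 - x"
  have "\<bar>t\<bar> < 1/2"
    using assms by (auto simp: t_def abs_if)
  have "(\<lambda>i. g_term i 0 t + g_kappa i * (g_recip t - 4/5)) sums (g_rem 0 t + g_K * (g_recip t - 4/5))"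
    using g_term_series_has_real_derivative[OF \<open>\<bar>t\<bar> < 1/2\<close>, of 0] summable_g_kappa
    unfolding g_rem_def g_K_def by (intro sums_add sums_mult2 summable_sums) auto
  with g_BR_diff_sums[OF assms] show ?thesis
    unfolding t_def [symmetric] by (simp add: sums_iff algebra_simps)
qed

lemma g_recip_eq_pole_pair_centered:
  assumes "\<bar>t\<bar> < 1/2"
  shows "g_recip t - 4/5 = pole_pair_centered 0 (sqrt 5/2) t / sqrt 5"
proof -
  have "1 < sqrt 5" "-1/2 < t" "t < 1/2"
    using real_sqrt_less_mono[of 1 5] assms by auto
  then have "sqrt 5/2 \<noteq> t" "sqrt 5/2 \<noteq> -t"
    by linarith+
  then have "pole_pair 0 (sqrt 5/2) t = 2 * (sqrt 5/2) / ((sqrt 5/2)^2 - t^2)"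
    by (rule pole_pair_0_eq)
  also have "\<dots> = sqrt 5 * g_recip t"
    by (simp add: g_recip_def power_divide)
  finally have "pole_pair_centered 0 (sqrt 5/2) t = sqrt 5 * g_recip t - 4/sqrt 5"
    by (simp add: pole_pair_centered_def pole_pair_0)
  moreover have "4 / sqrt 5 = sqrt 5 * (4/5)"
    by (simp add: field_simps)
  ultimately show ?thesis
    by (simp add: field_simps)
qed

lemma g_BR_half_pos: "g_BR (1/2) > 0"
proof -
  have "Beta (1/2) (1 - 1/2) = pi"
    using Beta_reflection[of "1/2"] by simp
  moreover have "RR (1/2) (1 - 1/2) = 4 * ln 2"
    unfolding RR_def using Digamma_one_half[where 'a=real] by simp
  ultimately have "g_BR (1/2) = 4 * ln 2 - 4/5 * pi"
    unfolding g_BR_def by simp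
  moreover have "pi < 16/5"
    using pi_approx(2) by simp
  ultimately show ?thesis
    using ln2_ge_two_thirds by linarith
qed

text \<open>The \<open>n\<close>-th derivative of \<open>t \<mapsto> g_BR (1/2 - t)\<close>, by \<open>g_BR_eq\<close> and \<open>g_recip_eq_pole_pair_centered\<close>.\<close>

definition g_reflected_deriv :: "nat \<Rightarrow> real \<Rightarrow> real" where
  "g_reflected_deriv n t = g_BR (1/2) * monomial_deriv 0 n t
     + g_K * pole_pair_centered n (sqrt 5/2) t / sqrt 5 + g_rem n t"

lemma g_BR_strictly_completely_monotonic: "strictly_completely_monotonic_on {0<..<1/2} g_BR"
proof (rule strictly_completely_monotonic_on_reflected[where U = "{0<..<1}" and c = "1/2"])
  show "g_BR x = g_reflected_deriv 0 (1/2 - x)" if "x \<in> {0<..<1}" for x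
  proof -
    have "\<bar>1/2 - x\<bar> < 1/2"
      using that by (auto simp: abs_if)
    then show ?thesis
      using g_BR_eq[of x] that by (simp add: g_reflected_deriv_def g_recip_eq_pole_pair_centered)
  qed
next
  fix n and x :: real
  assume "x \<in> {0<..<1}"
  then have "\<bar>1/2 - x\<bar> < 1/2"
    by (auto simp: abs_if)
  then have "(g_rem n has_real_derivative g_rem (Suc n) (1/2 - x)) (at (1/2 - x))"
    using g_term_series_has_real_derivative by blast
  moreover have "1 < sqrt 5" "0 < x" "x < 1"
    using real_sqrt_less_mono[of 1 5] \<open>x \<in> {0<..<1}\<close> by auto
  then have "1/2 - x \<noteq> sqrt 5/2" "1/2 - x \<noteq> - (sqrt 5/2)"
    by linarith+
  ultimately show "(g_reflected_deriv n has_real_derivative g_reflected_deriv (Suc n) (1/2 - x)) (at (1/2 - x))"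
    unfolding g_reflected_deriv_def [abs_def]
    by (intro DERIV_add DERIV_cmult DERIV_cdivide has_real_derivative_monomial_deriv
        has_real_derivative_pole_pair_centered)
next
  fix n and x :: real
  assume "x \<in> {0<..<1/2}"
  then have t: "0 < 1/2 - x" "1/2 - x < 1/2"
    by auto
  have "1 < sqrt 5"
    using real_sqrt_less_mono[of 1 5] by simp
  with t have "0 < pole_pair_centered n (sqrt 5/2) (1/2 - x)"
    by (intro pole_pair_centered_pos) linarith+
  then have "0 \<le> g_K * pole_pair_centered n (sqrt 5/2) (1/2 - x) / sqrt 5"
    using g_K_nonneg by simp
  moreover have "0 \<le> g_BR (1/2) * monomial_deriv 0 n (1/2 - x)"
    using t g_BR_half_pos by (simp add: monomial_deriv_nonneg)
  ultimately show "g_reflected_deriv n (1/2 - x) > 0"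
    unfolding g_reflected_deriv_def using g_rem_pos[OF t, of n] by linarith
qed auto

theorem proposition4:
  shows "strictly_completely_monotonic_on {0<..<1/2}
           (\<lambda>x::real. (1 + x * (1 - x) - (x * (1 - x))^2) * Beta x (1 - x) - RR x (1 - x)) \<and>
         strictly_completely_monotonic_on {0<..<1/2}
           (\<lambda>x::real. RR x (1 - x) - Beta x (1 - x) / (1 + x * (1 - x)))"
  using f_BR_strictly_completely_monotonic g_BR_strictly_completely_monotonic
  unfolding f_BR_def [abs_def] g_BR_def [abs_def] by blast

end
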